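(* Let $f$ be a generalized polynomial and let $D$ be a nonconstant complex polynomial. For each $a\in\mathbb{C}$ let $\mu_a$ be the multiplicity of $a$ as a root of $D$. Then there is a unique pair $(q,R)$ such that $q$ is a generalized polynomial, $R$ is a complex polynomial of degree $<\deg D$, and $f=D\,q+R$. Moreover $R$ is given by the Taylor–Gauss Formula $$R(X)=\sum_{D(a)=0}\ J_a^{\mu_a-1}\!\left(f(X)\,\frac{(X-a)^{\mu_a}}{D(X)}\right)\frac{D(X)}{(X-a)^{\mu_a}}.$$
   Context: For $a\in\mathbb{C}$, a Laurent series in $X-a$ is a formal sum $\sum_{n\in\mathbb{Z}} f_{a,n}(X-a)^n$ with complex coefficients, only finitely many nonzero coefficients of negative index; these form a field $\mathbb{C}((X-a))$. A generalized rational fraction is a family $f=(f_a)_{a\in\mathbb{C}}$ with $f_a\in\mathbb{C}((X-a))$; such families are added, multiplied and differentiated componentwise. A complex polynomial $P$ is identified with the family $\big(\sum_{n\ge0}\frac{P^{(n)}(a)}{n!}(X-a)^n\big)_{a\in\mathbb{C}}$ of its Taylor expansions; a nonzero polynomial is invertible in this ring, so $f/D$ makes sense. A generalized polynomial is a generalized rational fraction $f$ with $f_a\in\mathbb{C}[[X-a]]$ for all $a$ ("$f$ is defined at every point"). For a generalized rational fraction $f$, $a\in\mathbb{C}$ and $k\in\mathbb{Z}$, $J_a^{k}(f):=\sum_{n\le k} f_{a,n}(X-a)^n$ (the order-$k$ expansion of $f$ at $a$); when $f$ is defined at $a$ and $k\ge 0$ this is a polynomial of degree $\le k$. *)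

theory Defs
  imports "HOL-Computational_Algebra.Computational_Algebra"
begin

text \<open>A generalized rational fraction: a family of Laurent series, the component at a
  being read as a Laurent series in (X - a).\<close>
type_synonym gen_frac = "complex \<Rightarrow> complex fls"

text \<open>A complex polynomial P viewed as the family of its Taylor expansions:
  the coefficient of (X-a)^n is P^(n)(a)/n!.\<close>
definition poly_to_gen :: "complex poly \<Rightarrow> gen_frac" where
  "poly_to_gen P = (\<lambda>a. fps_to_fls (Abs_fps (\<lambda>n. poly ((pderiv ^^ n) P) a / fact n)))"

definition gen_poly :: "gen_frac \<Rightarrow> bool" where
  "gen_poly f \<longleftrightarrow> (\<forall>a. \<forall>n::int. n < 0 \<longrightarrow> fls_nth (f a) n = 0)"

definition jet_poly :: "complex \<Rightarrow> nat \<Rightarrow> gen_frac \<Rightarrow> complex poly" where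
  "jet_poly a k f = (\<Sum>n\<le>k. smult (fls_nth (f a) (int n)) ([:-a, 1:] ^ n))"

definition taylor_gauss :: "gen_frac \<Rightarrow> complex poly \<Rightarrow> complex poly" where
  "taylor_gauss f D =
     (\<Sum>a\<in>{a. poly D a = 0}.
        jet_poly a (order a D - 1)
          (\<lambda>b. f b * poly_to_gen ([:-a, 1:] ^ order a D) b / poly_to_gen D b)
        * (D div [:-a, 1:] ^ order a D))"

end

theory Submission
  imports Defs
begin

(* At a point a, a polynomial P becomes its Taylor expansion P(X + a), whose valuation is the
   multiplicity of a as a root of P. Hence f = D q + R with q a generalized polynomial iff, at
   every a, f - R vanishes to order mu_a (and then q = (f - R) / D componentwise). Two remainders
   of degree < deg D with this property differ by a polynomial having all roots of D with at
   least their multiplicities, so they coincide. The Taylor-Gauss polynomial has the property: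
   writing D = (X - a)^mu_a E_a, the a-term J E_a, with J the (mu_a - 1)-jet of f / E_a at a,
   agrees with f = (f / E_a) E_a to order mu_a at a, while every other term is divisible by
   (X - a)^mu_a through its cofactor. *)

section \<open>Taylor expansions of polynomials\<close>

lemma higher_pderiv_pcompose_linear:
  "(pderiv ^^ n) (P \<circ>\<^sub>p [:a, 1:]) = (pderiv ^^ n) P \<circ>\<^sub>p [:a, 1:]"
  by (induction n) (simp_all add: pderiv_pcompose pderiv_pCons)

lemma poly_to_gen_conv_pcompose:
  "poly_to_gen P a = fps_to_fls (fps_of_poly (P \<circ>\<^sub>p [:a, 1:]))"
proof -
  have "poly ((pderiv ^^ n) P) a = fact n * coeff (P \<circ>\<^sub>p [:a, 1:]) n" for n
  proof -
    have "poly ((pderiv ^^ n) P) a = coeff ((pderiv ^^ n) (P \<circ>\<^sub>p [:a, 1:])) 0"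
      by (simp add: higher_pderiv_pcompose_linear poly_0_coeff_0 [symmetric] poly_pcompose)
    also have "\<dots> = fact n * coeff (P \<circ>\<^sub>p [:a, 1:]) n"
      by (simp add: coeff_higher_pderiv pochhammer_fact)
    finally show ?thesis .
  qed
  then show ?thesis
    unfolding poly_to_gen_def by (simp add: fps_eq_iff)
qed

lemma poly_to_gen_add: "poly_to_gen (P + Q) a = poly_to_gen P a + poly_to_gen Q a"
  by (simp add: poly_to_gen_conv_pcompose pcompose_add fps_of_poly_add)

lemma poly_to_gen_diff: "poly_to_gen (P - Q) a = poly_to_gen P a - poly_to_gen Q a"
  by (simp add: poly_to_gen_conv_pcompose pcompose_diff fps_of_poly_diff)

lemma poly_to_gen_mult: "poly_to_gen (P * Q) a = poly_to_gen P a * poly_to_gen Q a"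
  by (simp add: poly_to_gen_conv_pcompose pcompose_mult fps_of_poly_mult fls_times_fps_to_fls)

lemma poly_to_gen_sum: "poly_to_gen (sum P A) a = (\<Sum>x\<in>A. poly_to_gen (P x) a)"
proof (induction A rule: infinite_finite_induct)
  case (insert x F)
  then show ?case by (simp add: poly_to_gen_add)
qed (simp_all add: poly_to_gen_conv_pcompose)

lemma pcompose_power: "(P ^ n) \<circ>\<^sub>p Q = (P \<circ>\<^sub>p Q) ^ n"
  by (induction n) (simp_all add: pcompose_mult pcompose_1)

lemma poly_to_gen_linear_power: "poly_to_gen ([:-a, 1:] ^ n) a = fls_X ^ n"
  by (simp add: poly_to_gen_conv_pcompose pcompose_power pcompose_pCons
      fps_of_poly_power fps_to_fls_power)

lemma poly_to_gen_eq_0_iff [simp]: "poly_to_gen P a = 0 \<longleftrightarrow> P = 0"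
  by (simp add: poly_to_gen_conv_pcompose pcompose_eq_0_iff fps_of_poly_eq_iff [of _ 0, simplified])

lemma order_pcompose_linear:
  assumes "P \<noteq> 0"
  shows "order 0 (P \<circ>\<^sub>p [:a, 1::complex:]) = order a P"
proof -
  obtain Q where P: "P = [:-a, 1:] ^ order a P * Q" and "\<not> [:-a, 1:] dvd Q"
    using order_decomp [OF assms] by blast
  then have "poly (Q \<circ>\<^sub>p [:a, 1:]) 0 \<noteq> 0"
    by (simp add: poly_pcompose poly_eq_0_iff_dvd)
  moreover have "P \<circ>\<^sub>p [:a, 1:] = [:-0, 1:] ^ order a P * (Q \<circ>\<^sub>p [:a, 1:])"
    by (subst P) (simp add: pcompose_mult pcompose_power pcompose_pCons)
  moreover have "Q \<noteq> 0"
    using assms P by auto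
  ultimately show ?thesis
    using order_power_n_n [of 0 "order a P"] by (simp add: order_mult pcompose_eq_0_iff order_0I)
qed

lemma fls_subdegree_poly_to_gen:
  "P \<noteq> 0 \<Longrightarrow> fls_subdegree (poly_to_gen P a) = int (order a P)"
  by (simp add: poly_to_gen_conv_pcompose fls_subdegree_fls_to_fps subdegree_fps_of_poly
      pcompose_eq_0_iff order_pcompose_linear)

section \<open>Vanishing order of Laurent series\<close>

definition fls_vanishes_below :: "int \<Rightarrow> 'a::zero fls \<Rightarrow> bool" where
  "fls_vanishes_below m x \<longleftrightarrow> (\<forall>n<m. fls_nth x n = 0)"

lemma fls_vanishes_below_iff:
  "fls_vanishes_below m x \<longleftrightarrow> x = 0 \<or> m \<le> fls_subdegree x"
  unfolding fls_vanishes_below_def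
  by (metis fls_subdegree_geI fls_eq0_below_subdegree fls_zero_nth order_less_le_trans)

lemma fls_vanishes_below_mono:
  "m \<le> k \<Longrightarrow> fls_vanishes_below k x \<Longrightarrow> fls_vanishes_below m x"
  by (simp add: fls_vanishes_below_def)

lemma fls_vanishes_below_0 [simp]: "fls_vanishes_below m 0"
  by (simp add: fls_vanishes_below_def)

lemma fls_vanishes_below_diff:
  "fls_vanishes_below m x \<Longrightarrow> fls_vanishes_below m y \<Longrightarrow> fls_vanishes_below m (x - y)"
  by (simp add: fls_vanishes_below_def)

lemma fls_vanishes_below_sum:
  "(\<And>i. i \<in> A \<Longrightarrow> fls_vanishes_below m (x i)) \<Longrightarrow> fls_vanishes_below m (sum x A)"
  by (simp add: fls_vanishes_below_def fls_nth_sum)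

lemma fls_vanishes_below_mult:
  fixes x y :: "'a::idom fls"
  shows "fls_vanishes_below m x \<Longrightarrow> fls_vanishes_below k y \<Longrightarrow> fls_vanishes_below (m + k) (x * y)"
  by (cases "x = 0 \<or> y = 0") (auto simp: fls_vanishes_below_iff)

lemma fls_vanishes_below_divide:
  fixes x y :: "'a::field fls"
  shows "fls_vanishes_below m x \<Longrightarrow> y \<noteq> 0 \<Longrightarrow> fls_vanishes_below (m - fls_subdegree y) (x / y)"
  by (cases "x = 0") (auto simp: fls_vanishes_below_iff fls_divide_subdegree)

lemma fls_vanishes_below_poly_to_gen: "fls_vanishes_below (int (order a P)) (poly_to_gen P a)"
  by (cases "P = 0") (simp_all add: fls_vanishes_below_iff fls_subdegree_poly_to_gen)

lemma fls_vanishes_below_0_poly_to_gen: "fls_vanishes_below 0 (poly_to_gen P a)"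
  using fls_vanishes_below_mono [OF _ fls_vanishes_below_poly_to_gen] by simp

lemma gen_poly_iff: "gen_poly f \<longleftrightarrow> (\<forall>a. fls_vanishes_below 0 (f a))"
  by (simp add: gen_poly_def fls_vanishes_below_def)

section \<open>Jets\<close>

lemma degree_jet_poly: "degree (jet_poly a k h) \<le> k"
  unfolding jet_poly_def
  by (rule degree_sum_le) (auto intro: order_trans [OF degree_smult_le] simp: degree_linear_power)

lemma fls_nth_poly_to_gen_jet_poly:
  assumes "0 \<le> n" "n \<le> int k"
  shows "fls_nth (poly_to_gen (jet_poly a k h) a) n = fls_nth (h a) n"
proof -
  have "jet_poly a k h \<circ>\<^sub>p [:a, 1:] = (\<Sum>m\<le>k. monom (fls_nth (h a) (int m)) m)"
    by (simp add: jet_poly_def pcompose_sum pcompose_smult pcompose_power pcompose_pCons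
        monom_altdef smult_monom)
  then show ?thesis
    using assms by (simp add: poly_to_gen_conv_pcompose coeff_sum)
qed

lemma fls_vanishes_below_jet_poly_remainder:
  assumes "fls_vanishes_below 0 (h a)"
  shows "fls_vanishes_below (int k + 1) (h a - poly_to_gen (jet_poly a k h) a)"
  unfolding fls_vanishes_below_def
proof (intro allI impI)
  fix n :: int
  assume "n < int k + 1"
  then show "fls_nth (h a - poly_to_gen (jet_poly a k h) a) n = 0"
    using assms fls_vanishes_below_0_poly_to_gen [of "jet_poly a k h" a]
    by (cases "n < 0") (simp_all add: fls_vanishes_below_def fls_nth_poly_to_gen_jet_poly)
qed

section \<open>Division with remainder by a polynomial\<close>

lemma degree_le_if_order_le:
  fixes P Q :: "complex poly"
  assumes "Q \<noteq> 0" "\<And>a. order a P \<le> order a Q"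
  shows "degree P \<le> degree Q"
proof -
  have "proots P \<subseteq># proots Q"
    using assms by (cases "P = 0") (auto simp: subseteq_mset_def)
  then show ?thesis
    by (metis size_mset_mono size_proots_complex)
qed

lemma local_congruence_if_gen_poly_division:
  assumes "gen_poly q" "f a = poly_to_gen D a * q a + poly_to_gen R a"
  shows "fls_vanishes_below (int (order a D)) (f a - poly_to_gen R a)"
  using fls_vanishes_below_mult [OF fls_vanishes_below_poly_to_gen, of 0 "q a"] assms
  by (simp add: gen_poly_iff)

lemma gen_poly_division_if_local_congruence:
  assumes "D \<noteq> 0"
    and "\<And>a. fls_vanishes_below (int (order a D)) (f a - poly_to_gen R a)"
  shows "\<exists>q. gen_poly q \<and> (\<forall>a. f a = poly_to_gen D a * q a + poly_to_gen R a)"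
proof (intro exI conjI allI)
  define q where "q a = (f a - poly_to_gen R a) / poly_to_gen D a" for a
  have "fls_vanishes_below 0 (q a)" for a
    using fls_vanishes_below_divide [OF assms(2), of "poly_to_gen D a" a] assms(1)
    by (simp add: q_def fls_subdegree_poly_to_gen)
  then show "gen_poly q"
    by (simp add: gen_poly_iff)
  show "f a = poly_to_gen D a * q a + poly_to_gen R a" for a
    using assms(1) by (simp add: q_def)
qed

lemma remainder_unique_if_local_congruence:
  fixes D R R' :: "complex poly"
  assumes "degree R < degree D" "degree R' < degree D"
    and "\<And>a. fls_vanishes_below (int (order a D)) (poly_to_gen R a - poly_to_gen R' a)"
  shows "R = R'"
proof (rule ccontr)
  assume "R \<noteq> R'"
  then have "R - R' \<noteq> 0" by simp
  have "order a D \<le> order a (R - R')" for a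
    using assms(3) [of a] \<open>R - R' \<noteq> 0\<close>
    by (simp add: poly_to_gen_diff [symmetric] fls_vanishes_below_iff fls_subdegree_poly_to_gen)
  then have "degree D \<le> degree (R - R')"
    using degree_le_if_order_le [OF \<open>R - R' \<noteq> 0\<close>] by blast
  moreover have "degree (R - R') < degree D"
    using degree_diff_le_max [of R R'] assms(1,2) by simp
  ultimately show False by simp
qed

section \<open>The Taylor-Gauss polynomial\<close>

definition taylor_gauss_term :: "gen_frac \<Rightarrow> complex poly \<Rightarrow> complex \<Rightarrow> complex poly" where
  "taylor_gauss_term f D a =
     jet_poly a (order a D - 1)
       (\<lambda>b. f b * poly_to_gen ([:-a, 1:] ^ order a D) b / poly_to_gen D b)
     * (D div [:-a, 1:] ^ order a D)"

lemma taylor_gauss_conv_sum: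
  "taylor_gauss f D = (\<Sum>a | poly D a = 0. taylor_gauss_term f D a)"
  by (simp add: taylor_gauss_def taylor_gauss_term_def)

lemma linear_power_order_mult_div: "[:-a, 1:] ^ order a D * (D div [:-a, 1:] ^ order a D) = D"
  by (rule dvd_mult_div_cancel [OF order_1])

lemma order_div_linear_power_order:
  fixes D :: "complex poly"
  assumes "D \<noteq> 0"
  shows "order b (D div [:-a, 1:] ^ order a D) = (if b = a then 0 else order b D)"
proof -
  have "order b D = order b ([:-a, 1:] ^ order a D) + order b (D div [:-a, 1:] ^ order a D)"
    using order_mult [of "[:-a, 1:] ^ order a D" "D div [:-a, 1:] ^ order a D" b] assms
    by (simp add: linear_power_order_mult_div)
  moreover have "order b ([:-a, 1:] ^ order a D) = (if b = a then order a D else 0)"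
    by (simp add: order_power_n_n order_0I)
  ultimately show ?thesis by (cases "b = a") auto
qed

lemma degree_taylor_gauss_term:
  fixes D :: "complex poly"
  assumes "D \<noteq> 0" "poly D a = 0"
  shows "degree (taylor_gauss_term f D a) < degree D"
proof -
  define E where "E = D div [:-a, 1:] ^ order a D"
  have "E \<noteq> 0"
    using linear_power_order_mult_div [of a D] assms(1) by (auto simp: E_def)
  have "degree D = degree ([:-a, 1:] ^ order a D * E)"
    by (simp add: E_def linear_power_order_mult_div)
  also have "\<dots> = order a D + degree E"
    using \<open>E \<noteq> 0\<close> by (simp add: degree_mult_eq degree_linear_power)
  finally have "degree D = order a D + degree E" .
  moreover have "degree (taylor_gauss_term f D a) \<le> (order a D - 1) + degree E"
    unfolding taylor_gauss_term_def E_def [symmetric]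
    by (rule order_trans [OF degree_mult_le add_right_mono [OF degree_jet_poly]])
  moreover have "order a D > 0"
    using assms order_gt_0_iff by blast
  ultimately show ?thesis by linarith
qed

lemma degree_taylor_gauss_less:
  fixes D :: "complex poly"
  assumes "degree D > 0"
  shows "degree (taylor_gauss f D) < degree D"
proof -
  have "D \<noteq> 0" using assms by auto
  then have "degree (taylor_gauss f D) \<le> degree D - 1"
    unfolding taylor_gauss_conv_sum
    by (intro degree_sum_le)
       (auto simp: poly_roots_finite dest: degree_taylor_gauss_term [OF \<open>D \<noteq> 0\<close>, of _ f])
  with assms show ?thesis by simp
qed

lemma taylor_gauss_term_local_self:
  fixes D :: "complex poly"
  assumes "D \<noteq> 0" "fls_vanishes_below 0 (f a)"
  shows "fls_vanishes_below (int (order a D)) (f a - poly_to_gen (taylor_gauss_term f D a) a)"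
proof -
  define \<mu> where "\<mu> = order a D"
  define E where "E = D div [:-a, 1:] ^ \<mu>"
  define U where "U = poly_to_gen E a"
  define g where "g = (\<lambda>b. f b * poly_to_gen ([:-a, 1:] ^ \<mu>) b / poly_to_gen D b)"
  define J where "J = jet_poly a (\<mu> - 1) g"
  have "E \<noteq> 0"
    using linear_power_order_mult_div [of a D] assms(1) by (auto simp: E_def \<mu>_def)
  then have "U \<noteq> 0" and "fls_subdegree U = 0"
    using order_div_linear_power_order [OF assms(1), of a a]
    by (simp_all add: U_def E_def \<mu>_def fls_subdegree_poly_to_gen)
  have "poly_to_gen D a = poly_to_gen ([:-a, 1:] ^ \<mu> * E) a"
    using linear_power_order_mult_div [of a D] by (simp add: E_def \<mu>_def)
  then have "poly_to_gen D a = fls_X ^ \<mu> * U"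
    by (simp add: poly_to_gen_mult poly_to_gen_linear_power U_def)
  then have g_a: "g a = f a / U"
    using \<open>U \<noteq> 0\<close> by (simp add: g_def poly_to_gen_linear_power)
  then have "fls_vanishes_below 0 (g a)"
    using fls_vanishes_below_divide [OF assms(2) \<open>U \<noteq> 0\<close>] \<open>fls_subdegree U = 0\<close> by simp
  then have "fls_vanishes_below (int (\<mu> - 1) + 1) (g a - poly_to_gen J a)"
    unfolding J_def by (rule fls_vanishes_below_jet_poly_remainder)
  then have "fls_vanishes_below (int (\<mu> - 1) + 1 + 0) ((g a - poly_to_gen J a) * U)"
    using fls_vanishes_below_0_poly_to_gen [of E a] unfolding U_def
    by (rule fls_vanishes_below_mult)
  then have "fls_vanishes_below (int \<mu>) ((g a - poly_to_gen J a) * U)"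
    by (rule fls_vanishes_below_mono [rotated]) simp
  moreover have "poly_to_gen (taylor_gauss_term f D a) a = poly_to_gen J a * U"
    by (simp add: taylor_gauss_term_def J_def g_def U_def E_def \<mu>_def poly_to_gen_mult)
  then have "f a - poly_to_gen (taylor_gauss_term f D a) a = (g a - poly_to_gen J a) * U"
    using \<open>U \<noteq> 0\<close> by (simp add: g_a algebra_simps)
  ultimately show ?thesis by (simp add: \<mu>_def)
qed

lemma taylor_gauss_term_local_other:
  fixes D :: "complex poly"
  assumes "D \<noteq> 0" "b \<noteq> a"
  shows "fls_vanishes_below (int (order b D)) (poly_to_gen (taylor_gauss_term f D a) b)"
  using fls_vanishes_below_mult [OF fls_vanishes_below_0_poly_to_gen
      fls_vanishes_below_poly_to_gen [of b "D div [:-a, 1:] ^ order a D"]]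
    order_div_linear_power_order [OF assms(1), of b a] assms(2)
  by (simp add: taylor_gauss_term_def poly_to_gen_mult)

lemma taylor_gauss_local:
  fixes D :: "complex poly"
  assumes "D \<noteq> 0" "gen_poly f"
  shows "fls_vanishes_below (int (order b D)) (f b - poly_to_gen (taylor_gauss f D) b)"
proof (cases "poly D b = 0")
  case True
  define Z where "Z = {a. poly D a = 0}"
  have "finite Z" "b \<in> Z"
    using poly_roots_finite [OF assms(1)] True by (simp_all add: Z_def)
  then have "f b - poly_to_gen (taylor_gauss f D) b =
      (f b - poly_to_gen (taylor_gauss_term f D b) b)
      - (\<Sum>a\<in>Z - {b}. poly_to_gen (taylor_gauss_term f D a) b)"
    unfolding taylor_gauss_conv_sum Z_def [symmetric] poly_to_gen_sum by (simp add: sum.remove)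
  also have "fls_vanishes_below (int (order b D)) \<dots>"
    using assms by (intro fls_vanishes_below_diff fls_vanishes_below_sum
        taylor_gauss_term_local_self taylor_gauss_term_local_other) (auto simp: gen_poly_iff)
  finally show ?thesis .
next
  case False
  then show ?thesis
    using assms(2) by (simp add: order_0I gen_poly_iff fls_vanishes_below_diff
        fls_vanishes_below_0_poly_to_gen)
qed

lemma gen_poly_division_unique:
  fixes D R R' :: "complex poly"
  assumes "gen_poly q" "degree R < degree D" "\<forall>a. f a = poly_to_gen D a * q a + poly_to_gen R a"
    and "gen_poly q'" "degree R' < degree D" "\<forall>a. f a = poly_to_gen D a * q' a + poly_to_gen R' a"
  shows "q = q' \<and> R = R'"
proof
  have "fls_vanishes_below (int (order a D)) (poly_to_gen R a - poly_to_gen R' a)" for a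
  proof -
    have "fls_vanishes_below (int (order a D)) ((f a - poly_to_gen R' a) - (f a - poly_to_gen R a))"
      using assms(1,3,4,6)
      by (blast intro: fls_vanishes_below_diff local_congruence_if_gen_poly_division)
    then show ?thesis by simp
  qed
  then show "R = R'"
    using assms(2,5) by (rule remainder_unique_if_local_congruence [rotated 2])
  have "D \<noteq> 0"
    using assms(2) by auto
  then show "q = q'"
    using assms(3,6) \<open>R = R'\<close> by (auto simp: fun_eq_iff)
qed

theorem mainTheorem1:
  fixes f :: gen_frac and D :: "complex poly"
  assumes "gen_poly f" and "degree D > 0"
  shows "(\<exists>!(q, R). gen_poly q \<and> degree R < degree D \<and>
             (\<forall>a. f a = poly_to_gen D a * q a + poly_to_gen R a))
         \<and> (\<forall>q R. gen_poly q \<and> degree R < degree D \<and>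
             (\<forall>a. f a = poly_to_gen D a * q a + poly_to_gen R a)
             \<longrightarrow> R = taylor_gauss f D)"
proof -
  have "D \<noteq> 0"
    using assms(2) by auto
  obtain q0 where "gen_poly q0" "\<forall>a. f a = poly_to_gen D a * q0 a + poly_to_gen (taylor_gauss f D) a"
    using gen_poly_division_if_local_congruence [OF \<open>D \<noteq> 0\<close> taylor_gauss_local [OF \<open>D \<noteq> 0\<close> assms(1)]]
    by blast
  moreover have "degree (taylor_gauss f D) < degree D"
    using assms(2) by (rule degree_taylor_gauss_less)
  ultimately show ?thesis
    using gen_poly_division_unique [of q0 "taylor_gauss f D" D f]
    by (auto intro!: ex1I [of _ "(q0, taylor_gauss f D)"])
qed

end
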